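(* Let $H=(U,(A_1,\dots,A_m))$ be a harmonic set system with $|U|<m(m-2)$ and $m\ge 51$. Then for any two nonconsecutive sets $I,J\subseteq[m]$ of size $3$, $H_{I,J}=\emptyset$.
   Context: For $I_1,I_2\subseteq[m]$, $H_{I_1,I_2}=\bigcap_{i\in I_1}A_i\cap\bigcap_{i\in I_2}(U\setminus A_i)$ (empty intersection $=U$), $H_I=H_{I,\emptyset}$. The run decomposition of a finite set $I$ of positive integers is the partition of sizes, in nonincreasing order, of the maximal runs of consecutive integers in $I$. $H$ is harmonic if $|H_I|=|H_J|$ whenever $I,J\subseteq[m]$ have the same run decomposition. A set of integers is nonconsecutive if no two distinct elements differ by exactly $1$. *)

theory Defs
  imports Main "HOL-Library.Multiset"
begin

text \<open>Set system: ground set U, sets A 1, ..., A m (indices in {1..m}).\<close>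

definition Hcell :: "'a set \<Rightarrow> (nat \<Rightarrow> 'a set) \<Rightarrow> nat set \<Rightarrow> nat set \<Rightarrow> 'a set" where
  "Hcell U A I1 I2 = {x \<in> U. (\<forall>i\<in>I1. x \<in> A i) \<and> (\<forall>i\<in>I2. x \<in> U - A i)}"

definition runs :: "nat set \<Rightarrow> nat set set" where
  "runs I = {R. \<exists>a b. a \<le> b \<and> R = {a..b} \<and> R \<subseteq> I \<and> Suc b \<notin> I
                   \<and> (\<forall>c. Suc c = a \<longrightarrow> c \<notin> I)}"

definition run_decomp :: "nat set \<Rightarrow> nat multiset" where
  "run_decomp I = image_mset card (mset_set (runs I))"

definition harmonic :: "'a set \<Rightarrow> (nat \<Rightarrow> 'a set) \<Rightarrow> nat \<Rightarrow> bool" where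
  "harmonic U A m \<longleftrightarrow> (\<forall>I J. I \<subseteq> {1..m} \<longrightarrow> J \<subseteq> {1..m} \<longrightarrow>
       run_decomp I = run_decomp J \<longrightarrow> card (Hcell U A I {}) = card (Hcell U A J {}))"

definition nonconsecutive :: "nat set \<Rightarrow> bool" where
  "nonconsecutive I \<longleftrightarrow> (\<forall>i\<in>I. \<forall>j\<in>I. i \<noteq> Suc j)"

end

theory Submission
  imports Defs "HOL.Binomial_Plus"
begin

(* For nonconsecutive K the harmonic condition makes |H_K| depend only on |K|, so by
   inclusion-exclusion |H_{K,L}| for disjoint K, L with nonconsecutive union depends only on
   k = |K| and l = |L|; call it c(k,l). Splitting along one more odd index gives Pascal's rule
   c(k,l) = c(k,l+1) + c(k+1,l) while k + l < R = (m+1) div 2, the largest size of a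
   nonconsecutive subset of [m]. Hence |U| = c(0,0) = sum_j (R choose j) c(j,R-j), and
   c(k,l) = sum_i (t choose i) c(k+i,l+t-i) with t = R-k-l.
   A point x of H_{I,J} lies in H_{K,L} for the parts K, L inside and outside {i. x in A_i} of a
   nonconsecutive D with |D| >= R-3: D is I (or J) together with the odd numbers not adjacent
   to it, and one of the two choices leaves at least three elements on either side. For
   k, l >= 3, t <= 3 and m >= 51 every weight (R choose k+i) is at least m(m-2)(t choose i), so
   |U| >= m(m-2) c(k,l) >= m(m-2). *)

lemma runs_nonconsecutive:
  assumes "nonconsecutive X"
  shows "runs X = (\<lambda>x. {x}) ` X"
proof (intro equalityI subsetI)
  fix R assume "R \<in> runs X"
  then obtain a b where ab: "a \<le> b" "R = {a..b}" "R \<subseteq> X"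
    unfolding runs_def by blast
  have "a = b"
  proof (rule ccontr)
    assume "a \<noteq> b"
    then have "a \<in> X" "Suc a \<in> X" using ab by auto
    then show False using assms unfolding nonconsecutive_def by blast
  qed
  then show "R \<in> (\<lambda>x. {x}) ` X" using ab by auto
next
  fix R assume "R \<in> (\<lambda>x. {x}) ` X"
  then obtain x where "x \<in> X" "R = {x}" by blast
  with assms show "R \<in> runs X"
    unfolding runs_def nonconsecutive_def by (intro CollectI exI[of _ x]) auto
qed

lemma run_decomp_nonconsecutive:
  assumes "nonconsecutive X"
  shows "run_decomp X = replicate_mset (card X) 1"
proof -
  have "run_decomp X = image_mset card (image_mset (\<lambda>x. {x}) (mset_set X))"
    unfolding run_decomp_def runs_nonconsecutive[OF assms]
    by (simp add: image_mset_mset_set inj_on_def)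
  also have "\<dots> = replicate_mset (card X) 1"
    by (simp add: multiset.map_comp comp_def image_mset_const_eq)
  finally show ?thesis .
qed

lemma nonconsecutive_subset: "nonconsecutive X \<Longrightarrow> Y \<subseteq> X \<Longrightarrow> nonconsecutive Y"
  unfolding nonconsecutive_def by blast

lemma nonconsecutive_if_odd: "(\<And>x. x \<in> X \<Longrightarrow> odd x) \<Longrightarrow> nonconsecutive X"
  unfolding nonconsecutive_def by (metis even_Suc)

lemma card_nonconsecutive_le:
  assumes "nonconsecutive X" "X \<subseteq> {1..m}"
  shows "2 * card X \<le> m + 1"
proof -
  let ?pair = "\<lambda>x. (x + 1) div 2"
  have "inj_on ?pair X"
  proof (rule inj_onI)
    fix x y assume xy: "x \<in> X" "y \<in> X" "?pair x = ?pair y"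
    then have "x = y \<or> x = Suc y \<or> y = Suc x" by presburger
    then show "x = y" using xy assms(1) unfolding nonconsecutive_def by blast
  qed
  moreover have "?pair ` X \<subseteq> {1..(m + 1) div 2}"
    using assms(2) by (fastforce simp: subset_eq intro: div_le_mono)
  ultimately have "card X \<le> card {1..(m + 1) div 2}"
    using card_image card_mono finite_atLeastAtMost by metis
  then show ?thesis by simp
qed

lemma card_Hcell_split:
  assumes "finite U"
  shows "card (Hcell U A K L) = card (Hcell U A K (insert x L)) + card (Hcell U A (insert x K) L)"
proof -
  have "Hcell U A K L = Hcell U A K (insert x L) \<union> Hcell U A (insert x K) L"
    unfolding Hcell_def by auto
  moreover have "Hcell U A K (insert x L) \<inter> Hcell U A (insert x K) L = {}"
    unfolding Hcell_def by auto
  moreover have "finite (Hcell U A K' L')" for K' L'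
    using assms unfolding Hcell_def by simp
  ultimately show ?thesis by (simp add: card_Un_disjoint)
qed

definition oddset :: "nat \<Rightarrow> nat \<Rightarrow> nat set" where
  "oddset a b = (\<lambda>i. 2 * i + 1) ` {a..<b}"

lemma finite_oddset [simp]: "finite (oddset a b)"
  unfolding oddset_def by simp

lemma card_oddset [simp]: "card (oddset a b) = b - a"
  unfolding oddset_def by (subst card_image) (auto simp: inj_on_def)

lemma nonconsecutive_oddset: "nonconsecutive (oddset a b)"
  unfolding oddset_def by (rule nonconsecutive_if_odd) auto

lemma oddset_subset_atLeastAtMost: "2 * b \<le> m + 1 \<Longrightarrow> oddset a b \<subseteq> {1..m}"
  unfolding oddset_def by auto

lemma oddset_Un: "a \<le> b \<Longrightarrow> b \<le> c \<Longrightarrow> oddset a b \<union> oddset b c = oddset a c"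
  unfolding oddset_def by (auto simp: image_Un[symmetric] ivl_disj_un)

lemma oddset_disjoint: "oddset a b \<inter> oddset b c = {}"
  unfolding oddset_def by auto

lemma insert_oddset: "a \<le> b \<Longrightarrow> insert (2 * b + 1) (oddset a b) = oddset a (Suc b)"
  unfolding oddset_def by (auto simp: atLeastLessThanSuc)

definition neighbours :: "nat set \<Rightarrow> nat set" where
  "neighbours I = Suc ` I \<union> (\<lambda>i. i - 1) ` I"

lemma finite_neighbours: "finite I \<Longrightarrow> finite (neighbours I)"
  unfolding neighbours_def by simp

lemma card_neighbours_le: "finite I \<Longrightarrow> card (neighbours I) \<le> 2 * card I"
  unfolding neighbours_def
  using card_Un_le[of "Suc ` I" "(\<lambda>i. i - 1) ` I"] card_image_le[of I Suc]
    card_image_le[of I "\<lambda>i. i - 1"]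
  by linarith

lemma nonconsecutive_extension:
  assumes "nonconsecutive I" "I \<subseteq> {1..m}"
  obtains D where "nonconsecutive D" "D \<subseteq> {1..m}" "I \<subseteq> D"
    "card (oddset 0 ((m + 1) div 2) - D) \<le> 2 * card I"
    "(m + 1) div 2 \<le> card D + card I"
proof -
  define Od where "Od = oddset 0 ((m + 1) div 2)"
  define D where "D = (Od - neighbours I) \<union> I"
  have fin: "finite I" "finite Od"
    using assms(2) finite_subset unfolding Od_def by auto
  have Od_odd: "odd x" if "x \<in> Od" for x
    using that unfolding Od_def oddset_def by auto
  have "D \<subseteq> {1..m}"
    unfolding D_def Od_def using assms(2) oddset_subset_atLeastAtMost[of "(m + 1) div 2" m 0]
    by auto
  moreover have "I \<subseteq> D"
    unfolding D_def by blast
  moreover have "nonconsecutive D"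
    unfolding nonconsecutive_def
  proof (intro ballI notI)
    fix x y assume "x \<in> D" "y \<in> D" "x = Suc y"
    then consider "x \<in> Od" "y \<in> Od" | "x \<in> I" "y \<in> I" | "x \<in> Od - neighbours I" "y \<in> I"
      | "x \<in> I" "y \<in> Od - neighbours I"
      unfolding D_def by blast
    then show False
    proof cases
      case 1
      then show False using Od_odd[of x] Od_odd[of y] \<open>x = Suc y\<close> by simp
    next
      case 2
      then show False using assms(1) \<open>x = Suc y\<close> unfolding nonconsecutive_def by blast
    next
      case 3
      then show False
        using \<open>x = Suc y\<close> unfolding neighbours_def by blast
    next
      case 4
      then have "y = x - 1"
        using \<open>x = Suc y\<close> by simp
      then show False
        using 4 unfolding neighbours_def by blast
    qed
  qed
  moreover have "card (Od - D) \<le> 2 * card I"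
  proof -
    have "Od - D \<subseteq> neighbours I"
      unfolding D_def by blast
    then have "card (Od - D) \<le> card (neighbours I)"
      by (intro card_mono finite_neighbours fin)
    then show ?thesis
      using card_neighbours_le[OF fin(1)] by linarith
  qed
  moreover have "(m + 1) div 2 \<le> card D + card I"
  proof -
    \<comment> \<open>an odd number next to I is next to an even element of I, which D contains instead\<close>
    define E where "E = I - Od"
    have "finite E"
      unfolding E_def using fin by simp
    have "Od \<inter> neighbours I \<subseteq> neighbours E"
    proof
      fix y assume y: "y \<in> Od \<inter> neighbours I"
      then obtain i where i: "i \<in> I" "y = Suc i \<or> y = i - 1"
        unfolding neighbours_def by blast
      have "1 \<le> i" "odd y"
        using i(1) assms(2) y Od_odd by auto
      then have "even i"
        using i(2) by (elim disjE; simp; presburger)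
      then have "i \<in> E"
        unfolding E_def using i(1) Od_odd by blast
      then show "y \<in> neighbours E"
        using i(2) unfolding neighbours_def by blast
    qed
    then have "card (Od \<inter> neighbours I) \<le> card (neighbours E)"
      using \<open>finite E\<close> by (intro card_mono finite_neighbours)
    also have "\<dots> \<le> 2 * card E"
      using \<open>finite E\<close> by (rule card_neighbours_le)
    finally have "card (Od \<inter> neighbours I) \<le> 2 * card E" .
    moreover have "card Od = card (Od \<inter> neighbours I) + card (Od - neighbours I)"
      using fin(2) by (rule card_Int_Diff)
    moreover have "card (Od - neighbours I) + card E \<le> card D"
    proof -
      have "card (Od - neighbours I) + card E = card ((Od - neighbours I) \<union> E)"
        using fin \<open>finite E\<close> unfolding E_def by (intro card_Un_disjoint[symmetric]) auto
      also have "\<dots> \<le> card D"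
        unfolding D_def E_def using fin by (intro card_mono) auto
      finally show ?thesis .
    qed
    moreover have "card E \<le> card I"
      unfolding E_def using fin by (simp add: card_mono)
    moreover have "card Od = (m + 1) div 2"
      unfolding Od_def by simp
    ultimately show ?thesis
      by linarith
  qed
  ultimately show thesis
    using that unfolding Od_def by blast
qed

lemma nonconsecutive_split:
  assumes "nonconsecutive I" "I \<subseteq> {1..m}" "I \<subseteq> S"
    and "2 * card I + n \<le> card (oddset 0 ((m + 1) div 2) - S)"
  obtains K L where "K \<inter> L = {}" "K \<union> L \<subseteq> {1..m}" "nonconsecutive (K \<union> L)"
    "I \<subseteq> K" "K \<subseteq> S" "L \<inter> S = {}" "n \<le> card L"
    "(m + 1) div 2 \<le> card K + card L + card I"
proof -
  define Od where "Od = oddset 0 ((m + 1) div 2)"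
  obtain D where D: "nonconsecutive D" "D \<subseteq> {1..m}" "I \<subseteq> D"
    "card (Od - D) \<le> 2 * card I" "(m + 1) div 2 \<le> card D + card I"
    using nonconsecutive_extension[OF assms(1,2)] unfolding Od_def by blast
  have fin: "finite D" "finite Od"
    using D(2) finite_subset unfolding Od_def by auto
  have "Od - S \<subseteq> (D - S) \<union> (Od - D)"
    by blast
  then have "card (Od - S) \<le> card ((D - S) \<union> (Od - D))"
    using fin by (intro card_mono) auto
  also have "\<dots> \<le> card (D - S) + card (Od - D)"
    by (rule card_Un_le)
  finally have "card (Od - S) \<le> card (D - S) + card (Od - D)" .
  then have "n \<le> card (D - S)"
    using assms(4) D(4) unfolding Od_def by linarith
  moreover have "card D = card (D \<inter> S) + card (D - S)"
    using fin(1) by (rule card_Int_Diff)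
  moreover have "D \<inter> S \<union> (D - S) = D"
    by blast
  ultimately show thesis
    using D assms(3) by (intro that[of "D \<inter> S" "D - S"]) auto
qed

lemma sum_binomial_Suc_split:
  fixes g :: "nat \<Rightarrow> nat"
  shows "(\<Sum>i\<le>Suc t. (Suc t choose i) * g i)
    = (\<Sum>i\<le>t. (t choose i) * g i) + (\<Sum>i\<le>t. (t choose i) * g (Suc i))"
proof -
  have "(\<Sum>i\<le>Suc t. (Suc t choose i) * g i) = g 0 + (\<Sum>i\<le>t. (Suc t choose Suc i) * g (Suc i))"
    by (subst sum.atMost_Suc_shift) simp
  also have "\<dots> = g 0 + (\<Sum>i<t. (t choose Suc i) * g (Suc i)) + (\<Sum>i\<le>t. (t choose i) * g (Suc i))"
    by (simp add: sum.distrib algebra_simps lessThan_Suc_atMost[symmetric])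
  also have "g 0 + (\<Sum>i<t. (t choose Suc i) * g (Suc i)) = (\<Sum>i\<le>t. (t choose i) * g i)"
    by (subst sum.atMost_shift) simp
  finally show ?thesis .
qed

lemma binomial_le_binomial_inner:
  assumes "a \<le> j" "j + a \<le> n"
  shows "n choose a \<le> n choose j"
proof (cases "2 * j \<le> n")
  case True
  then show ?thesis using binomial_mono[OF assms(1)] by simp
next
  case False
  then have "n choose a \<le> n choose (n - j)"
    using assms by (intro binomial_mono) auto
  also have "\<dots> = n choose j"
    using assms by (intro binomial_symmetric[symmetric]) simp
  finally show ?thesis .
qed

lemma six_mult_choose_three: "6 * (n choose 3) = n * (n - 1) * (n - 2)"
proof -
  have three: "3 * (n choose 3) = (n - 2) * (n choose 2)"
    using binomial_absorption[of 2 n] binomial_absorb_comp[of n 2] by (simp add: numeral_eq_Suc)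
  have two: "2 * (n choose 2) = n * (n - 1)"
    using binomial_absorption[of 1 n] binomial_absorb_comp[of n 1] by (simp add: numeral_eq_Suc)
  have "6 * (n choose 3) = (n - 2) * (2 * (n choose 2))"
    using three by simp
  also have "\<dots> = n * (n - 1) * (n - 2)"
    using two by simp
  finally show ?thesis .
qed

lemma four_mult_choose_four: "4 * (n choose 4) = (n - 3) * (n choose 3)"
  using binomial_absorption[of 3 n] binomial_absorb_comp[of n 3] by (simp add: numeral_eq_Suc)

lemma quadratic_le_choose_three:
  assumes "51 \<le> m"
  shows "m * (m - 2) \<le> ((m + 1) div 2) choose 3"
proof -
  define R where "R = (m + 1) div 2"
  have "m * (m - 2) \<le> (2 * R) * (2 * R - 2)"
    unfolding R_def by (intro mult_le_mono) auto
  also have "\<dots> = 4 * (R * (R - 1))"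
    by (simp add: algebra_simps)
  also have "24 * (R * (R - 1)) \<le> (R - 2) * (R * (R - 1))"
    using assms unfolding R_def by (intro mult_right_mono) auto
  then have "4 * (R * (R - 1)) \<le> R choose 3"
    using six_mult_choose_three[of R] by (simp add: algebra_simps)
  finally show ?thesis unfolding R_def .
qed

lemma three_choose_three_le_choose_four:
  assumes "15 \<le> n"
  shows "3 * (n choose 3) \<le> n choose 4"
proof -
  have "12 * (n choose 3) \<le> (n - 3) * (n choose 3)"
    using assms by (intro mult_right_mono) auto
  then show ?thesis
    using four_mult_choose_four[of n] by linarith
qed

lemma quadratic_binomial_weight_le:
  assumes "51 \<le> m" "k + l + t = (m + 1) div 2" "3 \<le> k" "3 \<le> l" "t \<le> 3" "i \<le> t"
  shows "m * (m - 2) * (t choose i) \<le> ((m + 1) div 2) choose (k + i)"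
proof (cases "i = 0 \<or> i = t")
  case True
  have "m * (m - 2) \<le> ((m + 1) div 2) choose 3"
    using assms(1) by (rule quadratic_le_choose_three)
  also have "\<dots> \<le> ((m + 1) div 2) choose (k + i)"
    using True assms by (intro binomial_le_binomial_inner) auto
  finally show ?thesis
    using True by auto
next
  case False
  then have "(t = 2 \<and> i = 1) \<or> (t = 3 \<and> i = 1) \<or> (t = 3 \<and> i = 2)"
    using assms(5,6) by auto
  then have "t choose i \<le> 3"
    by (auto simp: numeral_eq_Suc)
  then have "m * (m - 2) * (t choose i) \<le> 3 * (((m + 1) div 2) choose 3)"
    using quadratic_le_choose_three[OF assms(1)] by (simp add: mult.commute mult_le_mono)
  also have "\<dots> \<le> ((m + 1) div 2) choose 4"
    using assms(1) by (intro three_choose_three_le_choose_four) simp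
  also have "\<dots> \<le> ((m + 1) div 2) choose (k + i)"
    using False assms by (intro binomial_le_binomial_inner) auto
  finally show ?thesis .
qed

locale harmonic_system =
  fixes U :: "'a set" and A :: "nat \<Rightarrow> 'a set" and m :: nat
  assumes finite_U: "finite U"
    and harmonic: "harmonic U A m"
begin

lemma card_Hcell_nonconsecutive_eq:
  assumes "nonconsecutive K" "nonconsecutive K'" "K \<subseteq> {1..m}" "K' \<subseteq> {1..m}"
    and "card K = card K'"
  shows "card (Hcell U A K {}) = card (Hcell U A K' {})"
proof -
  have "run_decomp K = run_decomp K'"
    using assms(1,2,5) by (simp add: run_decomp_nonconsecutive)
  then show ?thesis
    using harmonic assms(3,4) unfolding harmonic_def by blast
qed

lemma card_Hcell_eq_if_card_eq:
  assumes "card L = card L'" "card K = card K'"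
    and "K \<inter> L = {}" "K' \<inter> L' = {}"
    and "K \<union> L \<subseteq> {1..m}" "K' \<union> L' \<subseteq> {1..m}"
    and "nonconsecutive (K \<union> L)" "nonconsecutive (K' \<union> L')"
  shows "card (Hcell U A K L) = card (Hcell U A K' L')"
  using assms
proof (induction "card L" arbitrary: K L K' L')
  case 0
  have "finite L" "finite L'"
    using "0.prems"(5,6) finite_subset[OF _ finite_atLeastAtMost] by auto
  then have "L = {}" "L' = {}"
    using "0.hyps" "0.prems"(1) by simp_all
  with "0.prems" show ?case
    using card_Hcell_nonconsecutive_eq[of K K'] by simp
next
  case (Suc n)
  obtain x L0 where L: "L = insert x L0" "x \<notin> L0" "card L0 = n"
    using Suc.hyps(2) card_eq_SucD by metis
  obtain x' L0' where L': "L' = insert x' L0'" "x' \<notin> L0'" "card L0' = n"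
    using Suc.hyps(2) Suc.prems(1) card_eq_SucD by metis
  have fin: "finite K" "finite K'"
    using Suc.prems(5,6) finite_subset[OF _ finite_atLeastAtMost] by auto
  have "x \<notin> K" "x' \<notin> K'"
    using Suc.prems(3,4) L L' by auto
  then have card_insert: "card (insert x K) = card (insert x' K')"
    using fin Suc.prems(2) by simp
  have "card (Hcell U A K L0) = card (Hcell U A K' L0')"
  proof (rule Suc.hyps(1))
    show "nonconsecutive (K \<union> L0)" "nonconsecutive (K' \<union> L0')"
      using Suc.prems(7,8) L L' by (auto intro: nonconsecutive_subset)
  qed (use Suc.prems L L' in auto)
  moreover have "card (Hcell U A (insert x K) L0) = card (Hcell U A (insert x' K') L0')"
  proof (rule Suc.hyps(1))
    show "nonconsecutive (insert x K \<union> L0)" "nonconsecutive (insert x' K' \<union> L0')"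
      using Suc.prems(7,8) L L' by (auto intro: nonconsecutive_subset)
  qed (use Suc.prems L L' card_insert in auto)
  moreover note card_Hcell_split[OF finite_U, of A K L0 x]
    card_Hcell_split[OF finite_U, of A K' L0' x']
  ultimately show ?case unfolding L(1) L'(1) by linarith
qed

definition cell_size :: "nat \<Rightarrow> nat \<Rightarrow> nat" where
  "cell_size k l = card (Hcell U A (oddset 0 k) (oddset k (k + l)))"

lemma card_Hcell_eq_cell_size:
  assumes "K \<inter> L = {}" "K \<union> L \<subseteq> {1..m}" "nonconsecutive (K \<union> L)"
  shows "card (Hcell U A K L) = cell_size (card K) (card L)"
proof -
  have "finite K" "finite L"
    using assms(2) finite_subset[OF _ finite_atLeastAtMost] by auto
  with assms have "2 * (card K + card L) \<le> m + 1"
    using card_nonconsecutive_le card_Un_disjoint by metis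
  then have "oddset 0 (card K + card L) \<subseteq> {1..m}"
    by (rule oddset_subset_atLeastAtMost)
  moreover have "oddset 0 (card K) \<union> oddset (card K) (card K + card L) = oddset 0 (card K + card L)"
    by (rule oddset_Un) simp_all
  ultimately show ?thesis
    unfolding cell_size_def using assms
    by (intro card_Hcell_eq_if_card_eq) (simp_all add: oddset_disjoint nonconsecutive_oddset)
qed

lemma cell_size_pascal:
  assumes "2 * (k + l + 1) \<le> m + 1"
  shows "cell_size k l = cell_size k (Suc l) + cell_size (Suc k) l"
proof -
  define x where "x = 2 * (k + l) + 1"
  have x_new: "x \<notin> oddset 0 k \<union> oddset k (k + l)"
    unfolding x_def oddset_def by auto
  have Un: "insert x (oddset 0 k) \<union> oddset k (k + l) = oddset 0 (Suc (k + l))"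
    using oddset_Un[of 0 k "k + l"] insert_oddset[of 0 "k + l"] unfolding x_def by auto
  have "card (Hcell U A (insert x (oddset 0 k)) (oddset k (k + l)))
      = cell_size (card (insert x (oddset 0 k))) (card (oddset k (k + l)))"
  proof (rule card_Hcell_eq_cell_size)
    show "insert x (oddset 0 k) \<inter> oddset k (k + l) = {}"
      using x_new oddset_disjoint[of 0 k "k + l"] by blast
    show "insert x (oddset 0 k) \<union> oddset k (k + l) \<subseteq> {1..m}"
      unfolding Un using assms by (intro oddset_subset_atLeastAtMost) simp
    show "nonconsecutive (insert x (oddset 0 k) \<union> oddset k (k + l))"
      unfolding Un by (rule nonconsecutive_oddset)
  qed
  also have "\<dots> = cell_size (Suc k) l"
    using x_new by simp
  finally show ?thesis
    using card_Hcell_split[OF finite_U, of A "oddset 0 k" "oddset k (k + l)" x]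
      insert_oddset[of k "k + l"]
    unfolding cell_size_def x_def by simp
qed

lemma cell_size_binomial_expansion:
  "2 * (k + l + t) \<le> m + 1 \<Longrightarrow>
    cell_size k l = (\<Sum>i\<le>t. (t choose i) * cell_size (k + i) (l + t - i))"
proof (induction t arbitrary: k l)
  case 0
  then show ?case by simp
next
  case (Suc t)
  define g where "g i = cell_size (k + i) (l + Suc t - i)" for i
  have "cell_size k l = cell_size k (Suc l) + cell_size (Suc k) l"
    using cell_size_pascal Suc.prems by simp
  also have "cell_size k (Suc l) = (\<Sum>i\<le>t. (t choose i) * g i)"
    using Suc.IH[of k "Suc l"] Suc.prems unfolding g_def by (simp add: Suc_diff_le)
  also have "cell_size (Suc k) l = (\<Sum>i\<le>t. (t choose i) * g (Suc i))"
    using Suc.IH[of "Suc k" l] Suc.prems unfolding g_def by simp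
  also have "(\<Sum>i\<le>t. (t choose i) * g i) + (\<Sum>i\<le>t. (t choose i) * g (Suc i))
      = (\<Sum>i\<le>Suc t. (Suc t choose i) * g i)"
    by (rule sum_binomial_Suc_split[symmetric])
  finally show ?case unfolding g_def .
qed

lemma card_U_eq_cell_size: "card U = cell_size 0 0"
  unfolding cell_size_def oddset_def Hcell_def by simp

lemma quadratic_le_card_U:
  assumes "Hcell U A K L \<noteq> {}" "K \<inter> L = {}" "K \<union> L \<subseteq> {1..m}" "nonconsecutive (K \<union> L)"
    and "3 \<le> card K" "3 \<le> card L" "(m + 1) div 2 \<le> card K + card L + 3" "51 \<le> m"
  shows "m * (m - 2) \<le> card U"
proof -
  define R where "R = (m + 1) div 2"
  define k where "k = card K"
  define l where "l = card L"
  define t where "t = R - (k + l)"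
  have "finite K" "finite L"
    using assms(3) finite_subset[OF _ finite_atLeastAtMost] by auto
  then have "2 * (k + l) \<le> m + 1"
    unfolding k_def l_def using assms(2-4) card_nonconsecutive_le card_Un_disjoint by metis
  then have klt: "k + l + t = R"
    unfolding t_def R_def by simp
  have "t \<le> 3"
    unfolding t_def R_def k_def l_def using assms(7) by linarith
  have expand: "cell_size a b = (\<Sum>i\<le>c. (c choose i) * cell_size (a + i) (R - (a + i)))"
    if "a + b + c = R" for a b c
  proof -
    have "R - (a + i) = b + c - i" for i
      using that by simp
    then show ?thesis
      using cell_size_binomial_expansion[of a b c] that unfolding R_def by simp
  qed
  have "finite (Hcell U A K L)"
    using finite_U unfolding Hcell_def by simp
  with assms(1) have "0 < card (Hcell U A K L)"
    by (simp add: card_gt_0_iff)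
  then have "1 \<le> cell_size k l"
    unfolding k_def l_def using card_Hcell_eq_cell_size[OF assms(2-4)] by simp
  then have "m * (m - 2) \<le> m * (m - 2) * cell_size k l"
    by simp
  also have "\<dots> = (\<Sum>i\<le>t. m * (m - 2) * (t choose i) * cell_size (k + i) (R - (k + i)))"
    unfolding expand[OF klt] by (simp add: sum_distrib_left mult.assoc)
  also have "\<dots> \<le> (\<Sum>i\<le>t. (R choose (k + i)) * cell_size (k + i) (R - (k + i)))"
    using assms(5,6,8) klt \<open>t \<le> 3\<close> unfolding R_def
    by (intro sum_mono mult_right_mono quadratic_binomial_weight_le[where l = l])
      (auto simp: k_def l_def)
  also have "\<dots> = (\<Sum>j\<in>(+) k ` {..t}. (R choose j) * cell_size j (R - j))"
    by (simp add: sum.reindex)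
  also have "\<dots> \<le> (\<Sum>j\<le>R. (R choose j) * cell_size j (R - j))"
    using klt by (intro sum_mono2) auto
  also have "\<dots> = card U"
    using expand[of 0 0 R] card_U_eq_cell_size by simp
  finally show ?thesis .
qed

lemma quadratic_le_card_U_if_odds_outside:
  assumes "x \<in> U" "51 \<le> m" "nonconsecutive I" "I \<subseteq> {1..m}" "card I = 3" "I \<subseteq> S"
    and "9 \<le> card (oddset 0 ((m + 1) div 2) - S)"
    and "S = {i. x \<in> A i} \<or> S = {i. x \<notin> A i}"
  shows "m * (m - 2) \<le> card U"
proof -
  obtain K L where KL: "K \<inter> L = {}" "K \<union> L \<subseteq> {1..m}" "nonconsecutive (K \<union> L)"
    "I \<subseteq> K" "K \<subseteq> S" "L \<inter> S = {}" "3 \<le> card L" "(m + 1) div 2 \<le> card K + card L + 3"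
    using nonconsecutive_split[OF assms(3,4,6), of 3] assms(5,7) by auto
  have "finite K"
    using KL(2) finite_subset by auto
  then have "3 \<le> card K"
    using card_mono[OF _ KL(4)] assms(5) by simp
  have "x \<in> Hcell U A K L \<or> x \<in> Hcell U A L K"
    using assms(1,8) KL(5,6) unfolding Hcell_def by auto
  then show ?thesis
  proof
    assume "x \<in> Hcell U A K L"
    then show ?thesis
      using KL \<open>3 \<le> card K\<close> assms(2) by (intro quadratic_le_card_U[of K L]) auto
  next
    assume "x \<in> Hcell U A L K"
    then show ?thesis
      using KL \<open>3 \<le> card K\<close> assms(2)
      by (intro quadratic_le_card_U[of L K]) (auto simp: Int_commute Un_commute)
  qed
qed

end

theorem proposition4p24:
  fixes U :: "'a set" and A :: "nat \<Rightarrow> 'a set" and m :: nat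
  assumes "finite U"
    and "\<forall>i\<in>{1..m}. A i \<subseteq> U"
    and "harmonic U A m"
    and "card U < m * (m - 2)"
    and "m \<ge> 51"
    and "I \<subseteq> {1..m}" and "J \<subseteq> {1..m}"
    and "card I = 3" and "card J = 3"
    and "nonconsecutive I" and "nonconsecutive J"
  shows "Hcell U A I J = {}"
proof (rule ccontr)
  assume "Hcell U A I J \<noteq> {}"
  then obtain x where x: "x \<in> Hcell U A I J"
    by blast
  interpret harmonic_system U A m
    using assms(1,3) by unfold_locales
  define Od where "Od = oddset 0 ((m + 1) div 2)"
  have "x \<in> U" "I \<subseteq> {i. x \<in> A i}" "J \<subseteq> {i. x \<notin> A i}"
    using x unfolding Hcell_def by auto
  have "Od - {i. x \<notin> A i} = Od \<inter> {i. x \<in> A i}"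
    by blast
  then have "card Od = card (Od - {i. x \<notin> A i}) + card (Od - {i. x \<in> A i})"
    using card_Int_Diff[of Od "{i. x \<in> A i}"] by (simp add: Od_def)
  moreover have "card Od = (m + 1) div 2"
    unfolding Od_def by simp
  ultimately have "9 \<le> card (Od - {i. x \<in> A i}) \<or> 9 \<le> card (Od - {i. x \<notin> A i})"
    using assms(5) by linarith
  then have "m * (m - 2) \<le> card U"
    unfolding Od_def
    using quadratic_le_card_U_if_odds_outside[OF \<open>x \<in> U\<close> assms(5)] assms(6-11)
      \<open>I \<subseteq> {i. x \<in> A i}\<close> \<open>J \<subseteq> {i. x \<notin> A i}\<close>
    by blast
  with assms(4) show False
    by simp
qed

end
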